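(* Let $\mathcal K\subseteq\mathbb R^n$ be convex, $f:\mathcal K\to\mathbb R$ convex and differentiable with a minimizer $x^\star\in\mathcal K$. Let $x_1,x_2,\dots\in\mathcal K$ be arbitrary, let $w_0,w_1,\dots$ be positive numbers, and define $\bar x_t=\frac{\sum_{k=0}^tw_kx_{k+1}}{\sum_{k=0}^tw_k}$. Let $\tilde\eta_0\ge\tilde\eta_1\ge\tilde\eta_2\ge\cdots$ be positive numbers. Then for every $T>0$, \[ \sum_{t=0}^{T-1}w_t\tilde\eta_t\langle\nabla f(\bar x_t),x_{t+1}-x^\star\rangle\ge0. \] *)

theory Defs
  imports "HOL-Analysis.Analysis"
begin

end

theory Submission
  imports Defs
begin

text \<open>
  Let \<open>W\<^sub>t\<close> be the total weight of the first \<open>t\<close> iterates, \<open>y\<^sub>t\<close> their weighted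
  average and \<open>E\<^sub>t = W\<^sub>t (f y\<^sub>t - f x\<^sup>\<star>)\<close>, so that \<open>E\<^sub>0 = 0\<close> and \<open>E\<^sub>t \<ge> 0\<close>.
  Since \<open>y\<^sub>t\<^sub>+\<^sub>1\<close> is a convex combination of \<open>y\<^sub>t\<close> and \<open>x\<^sub>t\<^sub>+\<^sub>1\<close>, two applications of
  the gradient inequality at \<open>y\<^sub>t\<^sub>+\<^sub>1\<close> show that the \<open>t\<close>-th summand without its
  factor \<open>\<eta>\<^sub>t\<close> is at least \<open>E\<^sub>t\<^sub>+\<^sub>1 - E\<^sub>t\<close>. Summation by parts against the
  nonincreasing nonnegative \<open>\<eta>\<^sub>t\<close> leaves a sum of nonnegative terms.
\<close>

lemma convex_on_above_tangent:
  fixes f :: "'a::real_normed_vector \<Rightarrow> real"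
  assumes convex: "convex_on K f" and deriv: "(f has_derivative D) (at a)"
    and "a \<in> K" "b \<in> K"
  shows "f a + D (b - a) \<le> f b"
proof -
  define \<phi> where "\<phi> = (\<lambda>t::real. f (a + t *\<^sub>R (b - a)))"
  have "linear D"
    using deriv by (rule has_derivative_linear)
  have line: "((\<lambda>t::real. a + t *\<^sub>R (b - a)) has_derivative (\<lambda>t. t *\<^sub>R (b - a))) (at 0)"
    by (auto intro!: derivative_eq_intros)
  have "(f has_derivative D) (at ((\<lambda>t::real. a + t *\<^sub>R (b - a)) 0))"
    using deriv by simp
  from has_derivative_compose[OF line this]
  have "(\<phi> has_derivative (\<lambda>t. t * D (b - a))) (at 0)"
    using linear_scale[OF \<open>linear D\<close>] by (simp add: \<phi>_def)
  then have "(\<phi> has_field_derivative D (b - a)) (at 0)"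
    by (simp add: has_field_derivative_def mult_commute_abs)
  then have "((\<lambda>t. (\<phi> t - \<phi> 0) / t) \<longlongrightarrow> D (b - a)) (at_right 0)"
    by (auto simp: has_field_derivative_iff intro: tendsto_mono[OF at_le])
  moreover have "\<forall>\<^sub>F t in at_right 0. (\<phi> t - \<phi> 0) / t \<le> f b - f a"
    unfolding eventually_at_right_field
  proof (intro exI[of _ 1] conjI allI impI)
    fix t :: real
    assume "0 < t" "t < 1"
    have "a + t *\<^sub>R (b - a) = (1 - t) *\<^sub>R a + t *\<^sub>R b"
      by (simp add: algebra_simps)
    then have "\<phi> t \<le> (1 - t) * f a + t * f b"
      using convex_onD[OF convex, of t a b] \<open>0 < t\<close> \<open>t < 1\<close> assms(3,4) by (simp add: \<phi>_def)
    then have "\<phi> t - \<phi> 0 \<le> t * (f b - f a)"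
      by (simp add: \<phi>_def algebra_simps)
    then show "(\<phi> t - \<phi> 0) / t \<le> f b - f a"
      using \<open>0 < t\<close> by (simp add: divide_le_eq mult.commute)
  qed simp
  ultimately have "D (b - a) \<le> f b - f a"
    by (rule tendsto_upperbound) simp
  then show ?thesis
    by simp
qed

lemma weighted_average_in_convex:
  fixes x :: "'i \<Rightarrow> 'a::real_vector"
  assumes "convex K" "finite I" "\<And>i. i \<in> I \<Longrightarrow> 0 \<le> w i" "0 < sum w I"
    and "\<And>i. i \<in> I \<Longrightarrow> x i \<in> K"
  shows "(\<Sum>i\<in>I. w i *\<^sub>R x i) /\<^sub>R sum w I \<in> K"
proof -
  have "(\<Sum>i\<in>I. (w i / sum w I) *\<^sub>R x i) \<in> K"
    using assms by (intro convex_sum) (auto simp flip: sum_divide_distrib)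
  then show ?thesis
    by (simp add: scaleR_sum_right divide_inverse_commute)
qed

lemma convex_on_running_average_bound:
  fixes f :: "'a::real_normed_vector \<Rightarrow> real"
  assumes convex: "convex_on K f" and deriv: "(f has_derivative D) (at q)"
    and "q \<in> K" "z \<in> K" "0 < W \<Longrightarrow> p \<in> K" "0 \<le> W" "0 \<le> w"
    and average: "(W + w) *\<^sub>R q = W *\<^sub>R p + w *\<^sub>R y"
  shows "(W + w) * (f q - f z) - W * (f p - f z) \<le> w * D (y - z)"
proof -
  have "linear D"
    using deriv by (rule has_derivative_linear)
  have "w *\<^sub>R (y - z) = - (w *\<^sub>R (z - q) + W *\<^sub>R (p - q))"
    using average by (simp add: algebra_simps)
  then have "D (w *\<^sub>R (y - z)) = D (- (w *\<^sub>R (z - q) + W *\<^sub>R (p - q)))"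
    by (rule arg_cong)
  then have "w * D (y - z) = - (w * D (z - q) + W * D (p - q))"
    by (simp only: linear_scale[OF \<open>linear D\<close>] linear_add[OF \<open>linear D\<close>]
        linear_neg[OF \<open>linear D\<close>] real_scaleR_def)
  moreover have "w * D (z - q) \<le> w * (f z - f q)"
    using convex_on_above_tangent[OF convex deriv, of z] assms(3,4,7)
    by (simp add: mult_left_mono)
  moreover have "W * D (p - q) \<le> W * (f p - f q)"
    using convex_on_above_tangent[OF convex deriv, of p] assms(3,5,6)
    by (cases "W = 0") (simp_all add: mult_left_mono)
  ultimately show ?thesis
    by (simp add: algebra_simps)
qed

lemma sum_decreasing_weights_telescoping_nonneg:
  fixes a E \<eta> :: "nat \<Rightarrow> real"
  assumes "E 0 = 0" "\<And>t. 0 \<le> E t" "\<And>t. E (Suc t) - E t \<le> a t"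
    and "\<And>t. 0 \<le> \<eta> t" "\<And>t. \<eta> (Suc t) \<le> \<eta> t"
  shows "0 \<le> (\<Sum>t<n. \<eta> t * a t)"
proof -
  have "\<eta> n * E n \<le> (\<Sum>t<n. \<eta> t * a t)"
  proof (induction n)
    case 0
    then show ?case
      using assms(1) by simp
  next
    case (Suc n)
    have "\<eta> (Suc n) * E (Suc n) \<le> \<eta> n * E (Suc n)"
      using assms(2,5) by (intro mult_right_mono)
    also have "\<dots> = \<eta> n * E n + \<eta> n * (E (Suc n) - E n)"
      by (simp add: algebra_simps)
    also have "\<dots> \<le> (\<Sum>t<n. \<eta> t * a t) + \<eta> n * a n"
      using Suc.IH assms(3,4) by (intro add_mono mult_left_mono)
    finally show ?case
      by simp
  qed
  then show ?thesis
    using assms(2,4) by (meson order_trans zero_le_mult_iff)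
qed

theorem lemma17:
  fixes K :: "(real ^ 'n) set"
    and f :: "real ^ 'n \<Rightarrow> real"
    and gradf :: "real ^ 'n \<Rightarrow> real ^ 'n"
    and xstar :: "real ^ 'n"
    and x :: "nat \<Rightarrow> real ^ 'n"
    and w :: "nat \<Rightarrow> real"
    and eta :: "nat \<Rightarrow> real"
    and T :: nat
  assumes K_convex: "convex K"
    and f_convex: "convex_on K f"
    and f_grad: "\<And>y. y \<in> K \<Longrightarrow> (f has_derivative (\<lambda>h. gradf y \<bullet> h)) (at y)"
    and xstar_in: "xstar \<in> K"
    and xstar_min: "\<And>y. y \<in> K \<Longrightarrow> f xstar \<le> f y"
    and x_in: "\<And>k. k \<ge> 1 \<Longrightarrow> x k \<in> K"
    and w_pos: "\<And>k. w k > 0"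
    and eta_pos: "\<And>k. eta k > 0"
    and eta_mono: "\<And>k. eta (Suc k) \<le> eta k"
    and T_pos: "T > 0"
  shows "(\<Sum>t<T. w t * eta t *
            (gradf ((\<Sum>k\<le>t. w k *\<^sub>R x (k + 1)) /\<^sub>R (\<Sum>k\<le>t. w k)) \<bullet> (x (t + 1) - xstar)))
         \<ge> 0"
proof -
  define W where "W t = (\<Sum>k<t. w k)" for t
  define S where "S t = (\<Sum>k<t. w k *\<^sub>R x (k + 1))" for t
  \<comment> \<open>\<open>xb 0 = 0\<close> is a junk value outside \<open>K\<close> in general, hence the guard \<open>0 < W\<close> on
    the previous average in \<open>convex_on_running_average_bound\<close>.\<close>
  define xb where "xb t = S t /\<^sub>R W t" for t
  define E where "E t = W t * (f (xb t) - f xstar)" for t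
  have W_pos: "0 < W t" if "0 < t" for t
    using that w_pos by (auto simp: W_def intro: sum_pos)
  have xb_in: "xb t \<in> K" if "0 < t" for t
    unfolding xb_def S_def W_def
    using K_convex W_pos[OF that] w_pos x_in
    by (intro weighted_average_in_convex) (auto simp: W_def less_imp_le)
  have S_eq: "S t = W t *\<^sub>R xb t" for t
    using W_pos[of t] by (cases t) (simp_all add: S_def W_def xb_def)
  have W_Suc: "W (Suc t) = W t + w t" for t
    by (simp add: W_def)
  have step: "E (Suc t) - E t \<le> w t * (gradf (xb (Suc t)) \<bullet> (x (t + 1) - xstar))" for t
  proof -
    have average: "(W t + w t) *\<^sub>R xb (Suc t) = W t *\<^sub>R xb t + w t *\<^sub>R x (t + 1)"
      using S_eq[of t] S_eq[of "Suc t"] by (simp add: S_def W_def)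
    have "xb t \<in> K" if "0 < W t"
      using that xb_in[of t] by (cases t) (simp_all add: W_def)
    moreover have "0 \<le> W t"
      using w_pos by (simp add: W_def sum_nonneg less_imp_le)
    ultimately show ?thesis
      using convex_on_running_average_bound[OF f_convex f_grad xb_in xstar_in _ _ _ average]
        xb_in[of "Suc t"] w_pos[of t] by (simp add: E_def W_Suc less_imp_le)
  qed
  have E_nonneg: "0 \<le> E t" for t
    using W_pos[of t] xstar_min[OF xb_in, of t] by (cases t) (simp_all add: E_def W_def)
  have "0 \<le> (\<Sum>t<T. eta t * (w t * (gradf (xb (Suc t)) \<bullet> (x (t + 1) - xstar))))"
    using E_nonneg step eta_pos eta_mono
    by (intro sum_decreasing_weights_telescoping_nonneg[where E = E])
      (simp_all add: E_def W_def less_imp_le)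
  then show ?thesis
    by (simp add: xb_def S_def W_def lessThan_Suc_atMost mult_ac)
qed

end
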